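(* For every integer $k\ge1$, $N(2k+4,k)=2$ if $3\mid k$ and $N(2k+4,k)=0$ if $3\nmid k$.
   Context: For $n>k\ge1$, $N(n,k)$ is the nullity of the $n\times n$ skew-symmetric Toeplitz matrix $A(n,k)$ whose first $k$ superdiagonals have all entries $1$ and whose remaining superdiagonals have all entries $0$. *)

theory Defs
  imports Complex_Main "Jordan_Normal_Form.Matrix_Kernel"
begin

definition skewA :: "nat \<Rightarrow> nat \<Rightarrow> real mat" where
  "skewA n k = mat n n (\<lambda>(i, j).
      if i < j \<and> j - i \<le> k then 1
      else if j < i \<and> i - j \<le> k then -1
      else 0)"

definition nullityN :: "nat \<Rightarrow> nat \<Rightarrow> nat" where
  "nullityN n k = kernel_dim (skewA n k)"

end

theory Submission
  imports Defs
begin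

text \<open>A kernel vector f of A(n,k), extended by zeros, satisfies row 0, f 1 + ... + f k = 0, and
the difference of rows i+1 and i, f (i+k+1) + f (i-k) = f i + f (i+1) (the term f (i-k) being
absent for i < k); in particular f is determined by f 0, ..., f k. For n = 2k+4 and k \<ge> 3,
using this recurrence twice and the vanishing of f beyond 2k+3 gives
f m + f (m+1) + f (m+2) = 0 for 2 \<le> m \<le> k-2, so f is 3-periodic on 2..k with the two free
parameters f 2, f 3, while the equations at the top end tie f 0, f 1, f (k-1), f k to them.
If 3 does not divide k these constraints force f = 0; if it does, every choice of f 2, f 3
extends to an explicit kernel vector, so the nullity is 2. For k = 1, 2 the system is small
enough to solve directly.\<close>

context kernel
begin

lemma dim_eq_0_if_trivial:
  assumes "mat_kernel A = {0\<^sub>v nc}"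
  shows "dim = 0"
proof -
  have "Ker.gen_set {}"
    using assms Ker.span_empty by simp
  then show ?thesis
    using Ker.gen_ge_dim[of "{}"] by simp
qed

lemma dim_eq_2_if_spanned_by_pair:
  assumes ker: "mat_kernel A = {a \<cdot>\<^sub>v u + b \<cdot>\<^sub>v w | a b. True}"
    and u: "u \<in> carrier_vec nc" and w: "w \<in> carrier_vec nc"
    and indep: "\<And>a b. a \<cdot>\<^sub>v u + b \<cdot>\<^sub>v w = 0\<^sub>v nc \<Longrightarrow> a = 0 \<and> b = 0"
  shows "dim = 2"
proof -
  have "u = 1 \<cdot>\<^sub>v u + 0 \<cdot>\<^sub>v w" "w = 0 \<cdot>\<^sub>v u + 1 \<cdot>\<^sub>v w"
    using u w by auto
  then have in_ker: "u \<in> mat_kernel A" "w \<in> mat_kernel A"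
    unfolding ker by (metis (mono_tags, lifting) mem_Collect_eq)+
  have "u \<noteq> w"
  proof
    assume "u = w"
    then have "1 \<cdot>\<^sub>v u + (-1) \<cdot>\<^sub>v w = 0\<^sub>v nc"
      using w by auto
    then show False
      using indep[of 1 "-1"] by simp
  qed
  have lincomb: "lincomb c {u, w} = c u \<cdot>\<^sub>v u + c w \<cdot>\<^sub>v w" for c
    using \<open>u \<noteq> w\<close> in_ker u w by (simp add: Ker.lincomb_insert2)
  have "lin_indpt {u, w}"
  proof (rule Ker.finite_lin_indpt2)
    fix c
    assume "lincomb c {u, w} = 0\<^sub>v nc"
    then show "\<forall>v\<in>{u, w}. c v = 0"
      using indep[of "c u" "c w"] by (simp add: lincomb)
  qed (use in_ker in auto)
  moreover have "span {u, w} = mat_kernel A"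
  proof
    show "span {u, w} \<subseteq> mat_kernel A"
      using in_ker by (intro Ker.span_is_subset2) auto
    show "mat_kernel A \<subseteq> span {u, w}"
    proof
      fix v
      assume "v \<in> mat_kernel A"
      then obtain a b where "v = a \<cdot>\<^sub>v u + b \<cdot>\<^sub>v w"
        unfolding ker by blast
      then have "v = lincomb (\<lambda>x. if x = u then a else b) {u, w}"
        using \<open>u \<noteq> w\<close> by (simp add: lincomb)
      then show "v \<in> span {u, w}"
        unfolding Ker.span_def by blast
    qed
  qed
  ultimately have "basis {u, w}"
    using in_ker unfolding Ker.basis_def by auto
  then have "dim = card {u, w}"
    by (intro Ker.dim_basis) auto
  then show ?thesis
    using \<open>u \<noteq> w\<close> by simp
qed

end

definition vec_seq :: "'a::zero vec \<Rightarrow> nat \<Rightarrow> 'a" where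
  "vec_seq v j = (if j < dim_vec v then v $ j else 0)"

lemma vec_seq_vec: "(\<And>j. n \<le> j \<Longrightarrow> f j = 0) \<Longrightarrow> vec_seq (vec n f) = f"
  by (auto simp: vec_seq_def fun_eq_iff)

lemma vec_vec_seq: "vec (dim_vec v) (vec_seq v) = v"
  by (auto simp: vec_seq_def)

definition band_row :: "nat \<Rightarrow> (nat \<Rightarrow> real) \<Rightarrow> nat \<Rightarrow> real" where
  "band_row k f i = (\<Sum>j = Suc i..i+k. f j) - (\<Sum>j = i-k..<i. f j)"

lemma skewA_carrier: "skewA n k \<in> carrier_mat n n"
  by (simp add: skewA_def)

lemma mult_skewA_vec_nth:
  assumes v: "v \<in> carrier_vec n" and i: "i < n"
  shows "(skewA n k *\<^sub>v v) $ i = band_row k (vec_seq v) i"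
proof -
  let ?f = "vec_seq v"
  have vanish: "?f j = 0" if "n \<le> j" for j
    using that v by (simp add: vec_seq_def)
  have "(skewA n k *\<^sub>v v) $ i = (\<Sum>j<n. (if i < j \<and> j - i \<le> k then ?f j else 0))
      - (\<Sum>j<n. (if j < i \<and> i - j \<le> k then ?f j else 0))"
    using v i unfolding skewA_def
    by (auto simp: scalar_prod_def lessThan_atLeast0 vec_seq_def sum_subtractf[symmetric]
        intro!: sum.cong)
  also have "(\<Sum>j<n. (if i < j \<and> j - i \<le> k then ?f j else 0)) = (\<Sum>j = Suc i..i+k. ?f j)"
    by (auto simp: sum.inter_filter[symmetric] intro!: sum.mono_neutral_left)
      (use vanish not_less in blast)
  also have "(\<Sum>j<n. (if j < i \<and> i - j \<le> k then ?f j else 0)) = (\<Sum>j = i-k..<i. ?f j)"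
    using i by (auto simp: sum.inter_filter[symmetric] intro!: sum.cong)
  finally show ?thesis
    unfolding band_row_def .
qed

lemma band_row_Suc:
  assumes "1 \<le> k"
  shows "band_row k f (Suc i) =
    band_row k f i + f (i+k+1) - f (i+1) - f i + (if k \<le> i then f (i-k) else 0)"
proof -
  have upper: "(\<Sum>j = Suc (Suc i)..Suc i+k. f j) = (\<Sum>j = Suc i..i+k. f j) + f (i+k+1) - f (i+1)"
    using assms by (simp add: sum.atLeast_Suc_atMost)
  have lower: "(\<Sum>j = Suc i - k..<Suc i. f j) =
      (\<Sum>j = i-k..<i. f j) + f i - (if k \<le> i then f (i-k) else 0)"
    using assms by (cases "k \<le> i") (simp_all add: sum.atLeast_Suc_lessThan Suc_diff_le)
  show ?thesis
    unfolding band_row_def upper lower by simp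
qed

text \<open>The equations of row 0 and of the differences of consecutive rows of A(n,k) f = 0.\<close>

locale skew_kernel_seq =
  fixes n k :: nat and f :: "nat \<Rightarrow> real"
  assumes vanish: "\<And>j. n \<le> j \<Longrightarrow> f j = 0"
    and initial_sum: "(\<Sum>j = 1..k. f j) = 0"
    and recurrence:
      "\<And>i. Suc i < n \<Longrightarrow> f (i+k+1) + (if k \<le> i then f (i-k) else 0) = f i + f (i+1)"

lemma band_rows_zero_iff:
  assumes k: "1 \<le> k" and n: "1 \<le> n" and vanish: "\<And>j. n \<le> j \<Longrightarrow> f j = 0"
  shows "(\<forall>i<n. band_row k f i = 0) \<longleftrightarrow> skew_kernel_seq n k f"
proof
  assume rows: "\<forall>i<n. band_row k f i = 0"
  show "skew_kernel_seq n k f"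
  proof
    show "(\<Sum>j = 1..k. f j) = 0"
      using rows n by (auto simp: band_row_def)
    show "f (i+k+1) + (if k \<le> i then f (i-k) else 0) = f i + f (i+1)" if "Suc i < n" for i
      using rows that band_row_Suc[OF k, of f i] by simp
  qed (fact vanish)
next
  assume "skew_kernel_seq n k f"
  then interpret skew_kernel_seq n k f .
  have "band_row k f i = 0" if "i < n" for i
    using that
  proof (induction i)
    case 0
    then show ?case
      using initial_sum by (simp add: band_row_def)
  next
    case (Suc i)
    then show ?case
      using band_row_Suc[OF k, of f i] recurrence[of i] by simp
  qed
  then show "\<forall>i<n. band_row k f i = 0"
    by blast
qed

lemma mat_kernel_skewA_iff:
  assumes "1 \<le> k" and "1 \<le> n"
  shows "v \<in> mat_kernel (skewA n k) \<longleftrightarrow>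
    v \<in> carrier_vec n \<and> skew_kernel_seq n k (vec_seq v)"
proof (cases "v \<in> carrier_vec n")
  case True
  then have "v \<in> mat_kernel (skewA n k) \<longleftrightarrow> (\<forall>i<n. (skewA n k *\<^sub>v v) $ i = 0)"
    by (auto simp: mat_kernel_def skewA_def vec_eq_iff simp del: index_mult_mat_vec)
  also have "\<dots> \<longleftrightarrow> (\<forall>i<n. band_row k (vec_seq v) i = 0)"
    using True by (simp add: mult_skewA_vec_nth)
  also have "\<dots> \<longleftrightarrow> skew_kernel_seq n k (vec_seq v)"
    using assms True by (intro band_rows_zero_iff) (auto simp: vec_seq_def)
  finally show ?thesis
    using True by simp
qed (auto dest: mat_kernelD[OF skewA_carrier])

context skew_kernel_seq
begin

lemma upper_eq:
  assumes "k < j" and "j < n + k"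
  shows "f j = f (j-k-1) + f (j-k) - (if 2*k < j then f (j - 2*k - 1) else 0)"
proof -
  obtain i where j: "j = i + k + 1"
    using \<open>k < j\<close> less_iff_Suc_add by auto
  have "i + k + 1 - 2*k - 1 = i - k" "2*k < i + k + 1 \<longleftrightarrow> k \<le> i"
    by auto
  then show ?thesis
    using recurrence[of i] assms by (simp add: j split: if_splits)
qed

lemma zero_if_initial_zero:
  assumes "1 \<le> k" and initial: "\<And>j. j \<le> k \<Longrightarrow> f j = 0"
  shows "f j = 0"
proof (induction j rule: less_induct)
  case (less j)
  consider "j \<le> k" | "k < j" "j < n + k" | "n \<le> j"
    by linarith
  then show ?case
  proof cases
    case 2
    then show ?thesis
      using upper_eq less.IH \<open>1 \<le> k\<close> by simp
  qed (simp_all add: initial vanish)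
qed

end

lemma skew_kernel_seq_diff:
  assumes "skew_kernel_seq n k f" and "skew_kernel_seq n k g"
  shows "skew_kernel_seq n k (\<lambda>j. f j - g j)"
proof -
  interpret F: skew_kernel_seq n k f by fact
  interpret G: skew_kernel_seq n k g by fact
  show ?thesis
  proof
    show "(f (i+k+1) - g (i+k+1)) + (if k \<le> i then f (i-k) - g (i-k) else 0) =
        (f i - g i) + (f (i+1) - g (i+1))" if "Suc i < n" for i
      using F.recurrence[OF that] G.recurrence[OF that] by (simp split: if_splits)
    show "(\<Sum>j = 1..k. f j - g j) = 0"
      using F.initial_sum G.initial_sum by (simp only: sum_subtractf)
  qed (simp add: F.vanish G.vanish)
qed

lemma skew_kernel_seq_2k4_small_zero:
  assumes "skew_kernel_seq (2*k+4) k f" and k: "k = 1 \<or> k = 2"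
  shows "f j = 0"
proof -
  interpret skew_kernel_seq "2*k+4" k f by fact
  have "f i = 0" if "i \<le> k" for i
    using k
  proof
    assume "k = 1"
    then have "f 1 = 0" "f 2 = f 0 + f 1" "f 3 + f 0 = f 1 + f 2" "f 4 + f 1 = f 2 + f 3"
        "f 5 + f 2 = f 3 + f 4" "f 6 + f 3 = f 4 + f 5" "f 6 = 0"
      using initial_sum recurrence[of 0] recurrence[of 1] recurrence[of 2] recurrence[of 3]
        recurrence[of 4] vanish[of 6]
      by (simp_all add: eval_nat_numeral)
    then have "f 0 = 0" "f 1 = 0"
      by linarith+
    then show "f i = 0"
      using \<open>i \<le> k\<close> \<open>k = 1\<close> by (auto simp: le_Suc_eq)
  next
    assume "k = 2"
    then have "f 1 + f 2 = 0" "f 3 = f 0 + f 1" "f 4 = f 1 + f 2" "f 5 + f 0 = f 2 + f 3"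
        "f 6 + f 1 = f 3 + f 4" "f 7 + f 2 = f 4 + f 5" "f 8 + f 3 = f 5 + f 6"
        "f 9 + f 4 = f 6 + f 7" "f 8 = 0" "f 9 = 0"
      using initial_sum recurrence[of 0] recurrence[of 1] recurrence[of 2] recurrence[of 3]
        recurrence[of 4] recurrence[of 5] recurrence[of 6] vanish[of 8] vanish[of 9]
      by (simp_all add: eval_nat_numeral)
    then have "f 0 = 0" "f 1 = 0" "f 2 = 0"
      by linarith+
    then show "f i = 0"
      using \<open>i \<le> k\<close> \<open>k = 2\<close> by (auto simp: le_Suc_eq numeral_eq_Suc)
  qed
  then show ?thesis
    using zero_if_initial_zero k by auto
qed

definition tri_periodic :: "real \<Rightarrow> real \<Rightarrow> nat \<Rightarrow> real" where
  "tri_periodic a b j = (if j mod 3 = 0 then b else if j mod 3 = 1 then - a - b else a)"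

lemma tri_periodic_simps [simp]:
  "tri_periodic a b 0 = b" "tri_periodic a b 1 = - a - b" "tri_periodic a b 2 = a"
  "tri_periodic a b 3 = b"
  by (simp_all add: tri_periodic_def)

lemma tri_periodic_mult_3 [simp]:
  "tri_periodic a b (3*q) = b" "tri_periodic a b (Suc (3*q)) = - a - b"
  "tri_periodic a b (Suc (Suc (3*q))) = a"
  by (simp_all add: tri_periodic_def mod_Suc)

lemma tri_periodic_add_period:
  "3 dvd d \<Longrightarrow> tri_periodic a b (j + d) = tri_periodic a b j"
  unfolding tri_periodic_def by (elim dvdE) simp

lemma tri_periodic_three_sum:
  "tri_periodic a b j + tri_periodic a b (j+1) + tri_periodic a b (j+2) = 0"
  by (auto simp: tri_periodic_def mod_Suc)

lemma sum_tri_periodic: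
  "(\<Sum>j = 1..k. tri_periodic a b j) =
    (if k mod 3 = 0 then 0 else if k mod 3 = 1 then - a - b else - b)"
  by (induction k) (auto simp: tri_periodic_def mod_Suc)

text \<open>For 3 dividing k these are exactly the kernel sequences of A(2k+4,k); for other k they
are not kernel sequences at all.\<close>

definition null_seq :: "nat \<Rightarrow> real \<Rightarrow> real \<Rightarrow> nat \<Rightarrow> real" where
  "null_seq k a b j =
    (if j = 0 then 0
     else if j \<le> k + 1 then tri_periodic a b j
     else if j \<le> 2*k + 2 then - tri_periodic a b (j+1)
     else 0)"

lemma skew_kernel_seq_null_seq:
  assumes "3 dvd k"
  shows "skew_kernel_seq (2*k+4) k (null_seq k a b)"
proof
  let ?P = "tri_periodic a b" and ?w = "null_seq k a b"
  have period: "?P (j + k) = ?P j" for j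
    using assms by (rule tri_periodic_add_period)
  show "?w j = 0" if "2*k+4 \<le> j" for j
    using that by (simp add: null_seq_def)
  show "(\<Sum>j = 1..k. ?w j) = 0"
    using assms sum_tri_periodic[of a b k] by (simp add: null_seq_def)
  fix i
  assume "Suc i < 2*k+4"
  then consider "i = 0" | "1 \<le> i" "i < k" | "i = k" | "i = k+1" | "i = k+2"
    | "k+3 \<le> i" "i \<le> 2*k" | "i = 2*k+1" | "i = 2*k+2"
    by linarith
  then show "?w (i+k+1) + (if k \<le> i then ?w (i-k) else 0) = ?w i + ?w (i+1)"
  proof cases
    case 2
    then show ?thesis
      using period[of "i+2"] tri_periodic_three_sum[of a b i] by (simp add: null_seq_def)
  next
    case 6
    then have "i - k \<le> k"
      by simp
    with 6 show ?thesis
      using period[of "i-k"] tri_periodic_three_sum[of a b i] by (simp add: null_seq_def)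
  qed (use \<open>3 dvd k\<close> in \<open>auto elim!: dvdE simp: null_seq_def tri_periodic_def mod_Suc\<close>)
qed

lemma vec_null_seq_lincomb:
  "a \<cdot>\<^sub>v vec n (null_seq k 1 0) + b \<cdot>\<^sub>v vec n (null_seq k 0 1) = vec n (null_seq k a b)"
  by (auto simp: null_seq_def tri_periodic_def)

lemma vec_null_seq_indep:
  assumes "2 \<le> k"
    and "a \<cdot>\<^sub>v vec (2*k+4) (null_seq k 1 0) + b \<cdot>\<^sub>v vec (2*k+4) (null_seq k 0 1) = 0\<^sub>v (2*k+4)"
  shows "a = 0 \<and> b = 0"
proof -
  have "null_seq k x y 2 = x" "null_seq k x y 3 = y" for x y
    using assms(1) by (simp_all add: null_seq_def)
  then show ?thesis
    using arg_cong[OF assms(2), of "\<lambda>v. v $ 2"] arg_cong[OF assms(2), of "\<lambda>v. v $ 3"] by simp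
qed

locale skew_kernel_seq_2k4 = skew_kernel_seq "2*k+4" k f for k f +
  assumes three_le_k: "3 \<le> k"
begin

lemma three_term_sum:
  assumes "2 \<le> m" and "m + 2 \<le> k"
  shows "f m + f (m+1) + f (m+2) = 0"
proof -
  have "f (m+k+1) = f m + f (m+1)" "f (m+1+k+1) = f (m+1) + f (m+2)"
    "f (m+k+1+k+1) + f (m+1) = f (m+k+1) + f (m+1+k+1)"
    using recurrence[of m] recurrence[of "m+1"] recurrence[of "m+k+1"] assms
    by simp_all
  moreover have "f (m+k+1+k+1) = 0"
    using assms by (intro vanish) simp
  ultimately show ?thesis
    by linarith
qed

lemma eq_tri_periodic:
  "2 \<le> j \<Longrightarrow> j \<le> k \<Longrightarrow> f j = tri_periodic (f 2) (f 3) j"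
proof (induction j rule: less_induct)
  case (less j)
  show ?case
  proof (cases "j \<le> 3")
    case True
    with less.prems have "j = 2 \<or> j = 3"
      by auto
    then show ?thesis
      by auto
  next
    case False
    define m where "m = j - 2"
    with False have j: "j = m + 2" and "2 \<le> m"
      by auto
    then have "f m + f (m+1) + f (m+2) = 0"
      using less.prems by (intro three_term_sum) auto
    moreover have "f m = tri_periodic (f 2) (f 3) m" "f (m+1) = tri_periodic (f 2) (f 3) (m+1)"
      using less.IH[of m] less.IH[of "m+1"] less.prems j \<open>2 \<le> m\<close> by simp_all
    ultimately show ?thesis
      using tri_periodic_three_sum[of "f 2" "f 3" m] j by simp
  qed
qed

lemma boundary_relations:
  "f (k-1) + f k + f 1 = 0" "f k + f 1 + f 2 = 0" "f 0 + f 1 + f 2 + f 3 = 0"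
proof -
  have low: "f (k+1) = f 0 + f 1" "f (k+2) = f 1 + f 2" "f (k+3) = f 2 + f 3"
    using recurrence[of 0] recurrence[of 1] recurrence[of 2] three_le_k
    by (simp_all add: eval_nat_numeral)
  have mid: "f (k+k) = f (k-1) + f k" "f (k+k+1) + f 0 = f k + f (k+1)"
    "f (k+k+2) + f 1 = f (k+1) + f (k+2)" "f (k+k+3) + f 2 = f (k+2) + f (k+3)"
    using recurrence[of "k-1"] recurrence[of k] recurrence[of "k+1"] recurrence[of "k+2"]
      three_le_k
    by (simp_all add: eval_nat_numeral split: if_splits)
  have high: "f k = f (k+k) + f (k+k+1)" "f (k+1) = f (k+k+1) + f (k+k+2)"
    "f (k+2) = f (k+k+2) + f (k+k+3)"
    using recurrence[of "k+k"] recurrence[of "k+k+1"] recurrence[of "k+k+2"]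
      vanish[of "k+k+k+1"] vanish[of "k+k+1+k+1"] vanish[of "k+k+2+k+1"] three_le_k
    by (simp_all add: eval_nat_numeral)
  show "f (k-1) + f k + f 1 = 0" "f k + f 1 + f 2 = 0" "f 0 + f 1 + f 2 + f 3 = 0"
    using low mid high by linarith+
qed

lemma low_values:
  shows "f 1 = - f 2 - f 3" and "f 0 = 0" and "\<not> 3 dvd k \<Longrightarrow> f 2 = 0 \<and> f 3 = 0"
proof -
  let ?P = "tri_periodic (f 2) (f 3)"
  have split: "(\<Sum>j = 1..k. g j) = g 1 + (\<Sum>j = 2..k. g j)" for g :: "nat \<Rightarrow> real"
    using three_le_k by (simp add: sum.atLeast_Suc_atMost numeral_2_eq_2)
  have "(\<Sum>j = 2..k. f j) = (\<Sum>j = 2..k. ?P j)"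
    by (intro sum.cong refl eq_tri_periodic) auto
  then have f1: "f 1 = - f 2 - f 3 - (\<Sum>j = 1..k. ?P j)"
    using initial_sum split[of f] split[of ?P] tri_periodic_simps(2)[of "f 2" "f 3"] by linarith
  have ends: "f k = ?P k" "f (k-1) = ?P (k-1)"
    using three_le_k by (intro eq_tri_periodic; simp)+
  have "\<exists>q. k = 3*q \<or> k = 3*q + 1 \<or> k = 3*q + 2"
    by presburger
  then obtain q where "k = 3*q \<or> k = 3*q + 1 \<or> k = 3*q + 2"
    by blast
  then have "f 1 = - f 2 - f 3 \<and> (\<not> 3 dvd k \<longrightarrow> f 2 = 0 \<and> f 3 = 0)"
  proof (elim disjE)
    assume "k = 3*q"
    then have "k mod 3 = 0" "3 dvd k"
      by simp_all
    then show ?thesis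
      using f1 sum_tri_periodic[of "f 2" "f 3" k] by simp
  next
    assume k: "k = 3*q + 1"
    then have "k mod 3 = 1" "\<not> 3 dvd k"
      by presburger+
    then have "f 1 = 0" "f k = - f 2 - f 3" "f (k-1) = f 3"
      using f1 ends sum_tri_periodic[of "f 2" "f 3" k] by (simp_all add: k)
    then show ?thesis
      using boundary_relations(1,2) by simp
  next
    assume k: "k = 3*q + 2"
    then have "k mod 3 = 2" "\<not> 3 dvd k"
      by presburger+
    then have "f 1 = - f 2" "f k = f 2" "f (k-1) = - f 2 - f 3"
      using f1 ends sum_tri_periodic[of "f 2" "f 3" k] by (simp_all add: k)
    then show ?thesis
      using boundary_relations(1,2) by simp
  qed
  then show "f 1 = - f 2 - f 3" and "\<not> 3 dvd k \<Longrightarrow> f 2 = 0 \<and> f 3 = 0"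
    by simp_all
  then show "f 0 = 0"
    using boundary_relations(3) by simp
qed

lemma initial_eq_null_seq:
  assumes "j \<le> k"
  shows "f j = null_seq k (f 2) (f 3) j"
proof -
  consider "j = 0" | "j = 1" | "2 \<le> j"
    by linarith
  then show ?thesis
  proof cases
    case 3
    then have "f j = tri_periodic (f 2) (f 3) j"
      using assms by (intro eq_tri_periodic)
    with 3 assms show ?thesis
      by (simp add: null_seq_def)
  qed (use low_values in \<open>simp_all add: null_seq_def tri_periodic_def\<close>)
qed

lemma eq_null_seq:
  assumes "3 dvd k"
  shows "f j = null_seq k (f 2) (f 3) j"
proof -
  interpret diff: skew_kernel_seq "2*k+4" k "\<lambda>j. f j - null_seq k (f 2) (f 3) j"
    using skew_kernel_seq_axioms skew_kernel_seq_null_seq[OF assms] by (rule skew_kernel_seq_diff)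
  have "f j - null_seq k (f 2) (f 3) j = 0"
  proof (rule diff.zero_if_initial_zero)
    show "f i - null_seq k (f 2) (f 3) i = 0" if "i \<le> k" for i
      using initial_eq_null_seq[OF that] by simp
  qed (use three_le_k in simp)
  then show ?thesis
    by simp
qed

lemma eq_zero_if_not_3_dvd:
  assumes "\<not> 3 dvd k"
  shows "f j = 0"
proof (rule zero_if_initial_zero)
  show "f i = 0" if "i \<le> k" for i
    using initial_eq_null_seq[OF that] low_values(3)[OF assms]
    by (simp add: null_seq_def tri_periodic_def)
qed (use three_le_k in simp)

end

lemma mat_kernel_skewA_2k4_not_3_dvd:
  assumes "1 \<le> k" and "\<not> 3 dvd k"
  shows "mat_kernel (skewA (2*k+4) k) = {0\<^sub>v (2*k+4)}"
proof -
  have "v = 0\<^sub>v (2*k+4)" if v: "v \<in> mat_kernel (skewA (2*k+4) k)" for v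
  proof -
    have v_dim: "v \<in> carrier_vec (2*k+4)" and seq: "skew_kernel_seq (2*k+4) k (vec_seq v)"
      using v assms(1) by (simp_all add: mat_kernel_skewA_iff)
    have "vec_seq v j = 0" for j
    proof (cases "k \<le> 2")
      case True
      with assms have "k = 1 \<or> k = 2"
        by auto
      with seq show ?thesis
        by (rule skew_kernel_seq_2k4_small_zero)
    next
      case False
      with seq interpret skew_kernel_seq_2k4 k "vec_seq v"
        by (intro skew_kernel_seq_2k4.intro skew_kernel_seq_2k4_axioms.intro) simp_all
      show ?thesis
        using assms(2) by (rule eq_zero_if_not_3_dvd)
    qed
    then have "vec_seq v = (\<lambda>_. 0)"
      by (simp add: fun_eq_iff)
    then show ?thesis
      using v_dim by (metis vec_vec_seq zero_vec_def carrier_vecD)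
  qed
  moreover have "0\<^sub>v (2*k+4) \<in> mat_kernel (skewA (2*k+4) k)"
    using skewA_carrier[of "2*k+4" k] by (auto intro!: mat_kernelI)
  ultimately show ?thesis
    by blast
qed

lemma mat_kernel_skewA_2k4_3_dvd:
  assumes "1 \<le> k" and "3 dvd k"
  shows "mat_kernel (skewA (2*k+4) k) = {vec (2*k+4) (null_seq k a b) | a b. True}"
proof (intro equalityI subsetI)
  fix v
  assume v: "v \<in> mat_kernel (skewA (2*k+4) k)"
  have v_dim: "v \<in> carrier_vec (2*k+4)" and "skew_kernel_seq (2*k+4) k (vec_seq v)"
    using v assms(1) by (simp_all add: mat_kernel_skewA_iff)
  moreover have "3 \<le> k"
    using assms dvd_imp_le by auto
  ultimately interpret skew_kernel_seq_2k4 k "vec_seq v"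
    by (intro skew_kernel_seq_2k4.intro skew_kernel_seq_2k4_axioms.intro)
  define a b where "a = vec_seq v 2" and "b = vec_seq v 3"
  have "vec_seq v = null_seq k a b"
    unfolding a_def b_def by (intro ext eq_null_seq assms(2))
  then have "v = vec (2*k+4) (null_seq k a b)"
    using vec_vec_seq[of v] v_dim by (metis carrier_vecD)
  then show "v \<in> {vec (2*k+4) (null_seq k a b) | a b. True}"
    by blast
next
  fix v
  assume "v \<in> {vec (2*k+4) (null_seq k a b) | a b. True}"
  then obtain a b where v: "v = vec (2*k+4) (null_seq k a b)"
    by blast
  have "vec_seq v = null_seq k a b"
    unfolding v by (rule vec_seq_vec) (simp add: null_seq_def)
  then have "skew_kernel_seq (2*k+4) k (vec_seq v)"
    using skew_kernel_seq_null_seq[OF assms(2)] by simp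
  then show "v \<in> mat_kernel (skewA (2*k+4) k)"
    using assms(1) by (simp add: mat_kernel_skewA_iff v)
qed

theorem theorem8p4:
  fixes k :: nat
  assumes "k \<ge> 1"
  shows "nullityN (2 * k + 4) k = (if 3 dvd k then 2 else 0)"
proof -
  let ?n = "2*k+4"
  interpret kernel ?n ?n "skewA ?n k"
    by unfold_locales (rule skewA_carrier)
  have "dim = (if 3 dvd k then 2 else 0)"
  proof (cases "3 dvd k")
    case True
    let ?u = "vec ?n (null_seq k 1 0)" and ?w = "vec ?n (null_seq k 0 1)"
    have "mat_kernel (skewA ?n k) = {a \<cdot>\<^sub>v ?u + b \<cdot>\<^sub>v ?w | a b. True}"
      using mat_kernel_skewA_2k4_3_dvd[OF assms True] by (simp only: vec_null_seq_lincomb)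
    moreover have "2 \<le> k"
      using True assms by (auto dest: dvd_imp_le)
    ultimately have "dim = 2"
      by (intro dim_eq_2_if_spanned_by_pair vec_null_seq_indep) auto
    with True show ?thesis
      by simp
  next
    case False
    then show ?thesis
      using mat_kernel_skewA_2k4_not_3_dvd[OF assms] dim_eq_0_if_trivial by simp
  qed
  then show ?thesis
    by (simp add: nullityN_def)
qed

end
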